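(* For every integer $n\geq 1$, $$c_n(231,312 : 231)=c_n(312,231 : 312)=2^{n-1}.$$
   Context: $S_n$ is the symmetric group on $[n]=\{1,\dots,n\}$, and a permutation $\pi\in S_n$ is written in one-line notation $\pi=\pi_1\pi_2\cdots\pi_n$ with $\pi_i=\pi(i)$. For $\tau\in S_k$, $k\le n$, $\pi$ contains $\tau$ if there are indices $i_1<\dots<i_k$ with $\pi_{i_s}>\pi_{i_t}$ iff $\tau_s>\tau_t$ for all $1\le s<t\le k$; otherwise $\pi$ avoids $\tau$. $\pi^2$ denotes the composition $\pi\circ\pi$. For patterns $\sigma_1,\sigma_2,\rho$, $c_n(\sigma_1,\sigma_2 : \rho)$ denotes the number of permutations $\pi\in S_n$ such that $\pi$ avoids both $\sigma_1$ and $\sigma_2$ and $\pi^2$ avoids $\rho$. *)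

theory Defs
  imports "HOL-Combinatorics.Permutations"
begin

text \<open>A pattern tau in S_k is given by its one-line
  notation as a list [tau_1, ..., tau_k] (0-based list indexing: tau ! s = tau_(s+1)).\<close>

definition contains :: "nat \<Rightarrow> (nat \<Rightarrow> nat) \<Rightarrow> nat list \<Rightarrow> bool" where
  "contains n \<pi> \<tau> \<longleftrightarrow>
     (\<exists>i :: nat \<Rightarrow> nat.
        (\<forall>s t. s < t \<and> t < length \<tau> \<longrightarrow> i s < i t) \<and>
        (\<forall>s < length \<tau>. 1 \<le> i s \<and> i s \<le> n) \<and>
        (\<forall>s t. s < t \<and> t < length \<tau> \<longrightarrow>
                 (\<pi> (i s) > \<pi> (i t) \<longleftrightarrow> \<tau> ! s > \<tau> ! t)))"

definition avoids :: "nat \<Rightarrow> (nat \<Rightarrow> nat) \<Rightarrow> nat list \<Rightarrow> bool" where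
  "avoids n \<pi> \<tau> \<longleftrightarrow> \<not> contains n \<pi> \<tau>"

definition c :: "nat \<Rightarrow> nat list \<Rightarrow> nat list \<Rightarrow> nat list \<Rightarrow> nat" where
  "c n \<sigma>1 \<sigma>2 \<rho> = card {\<pi>. \<pi> permutes {1..n} \<and> avoids n \<pi> \<sigma>1 \<and> avoids n \<pi> \<sigma>2
                              \<and> avoids n (\<pi> \<circ> \<pi>) \<rho>}"

end

theory Submission
  imports Defs
begin

(* Av(231, 312) consists of the layered permutations.  If \<pi> avoids 231 and 312 and
  \<pi>(j) = n, then avoiding 231 puts every entry left of position j below every entry right
  of it, so \<pi> maps {1..j-1} onto itself, and avoiding 312 makes the entries from position j
  on decreasing, hence equal to n, n-1, ..., j.  Thus \<pi> is a layered permutation of size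
  j - 1 followed by one decreasing layer, which gives the count
  L(n) = L(0) + ... + L(n-1), i.e. L(n) = 2^(n-1), and shows by induction that every
  layered permutation is an involution.  So \<pi>\<circ>\<pi> = id, which avoids every
  pattern of length 3 other than 123, and the condition on \<pi>\<circ>\<pi> is vacuous. *)

lemma contains_length3_iff:
  "contains n \<pi> [p, q, r] \<longleftrightarrow>
     (\<exists>x y z. 1 \<le> x \<and> x < y \<and> y < z \<and> z \<le> n \<and>
        (\<pi> y < \<pi> x \<longleftrightarrow> q < p) \<and> (\<pi> z < \<pi> x \<longleftrightarrow> r < p) \<and> (\<pi> z < \<pi> y \<longleftrightarrow> r < q))"
    (is "?contains \<longleftrightarrow> (\<exists>x y z. ?triple x y z)")
proof
  assume ?contains
  have length: "length [p, q, r] = 3" by simp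
  from \<open>?contains\<close> obtain i where incr: "\<forall>s t. s < t \<and> t < 3 \<longrightarrow> i s < i t"
    and range: "\<forall>s < 3. 1 \<le> i s \<and> i s \<le> n"
    and order: "\<forall>s t. s < t \<and> t < 3 \<longrightarrow>
                  (\<pi> (i t) < \<pi> (i s) \<longleftrightarrow> [p, q, r] ! t < [p, q, r] ! s)"
    unfolding contains_def length by blast
  have "?triple (i 0) (i 1) (i 2)"
    using incr[rule_format, of 0 1] incr[rule_format, of 1 2] range[rule_format, of 0]
      range[rule_format, of 2] order[rule_format, of 0 1] order[rule_format, of 0 2]
      order[rule_format, of 1 2]
    by (simp add: numeral_2_eq_2)
  then show "\<exists>x y z. ?triple x y z" by blast
next
  assume "\<exists>x y z. ?triple x y z"
  then obtain x y z where xyz: "?triple x y z" by blast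
  let ?i = "\<lambda>s::nat. if s = 0 then x else if s = 1 then y else z"
  have pairs: "s = 0 \<and> t = 1 \<or> s = 0 \<and> t = 2 \<or> s = 1 \<and> t = 2"
    if "s < t" "t < 3" for s t :: nat
    using that by arith
  have "\<forall>s t. s < t \<and> t < 3 \<longrightarrow> ?i s < ?i t \<and>
          (\<pi> (?i t) < \<pi> (?i s) \<longleftrightarrow> [p, q, r] ! t < [p, q, r] ! s)"
    using pairs xyz by (auto simp: numeral_2_eq_2)
  moreover have "\<forall>s < 3. 1 \<le> ?i s \<and> ?i s \<le> n"
    using xyz by auto
  ultimately show ?contains
    unfolding contains_def by (intro exI[of _ ?i]) auto
qed

lemma avoids_231_iff:
  "avoids n \<pi> [2, 3, 1] \<longleftrightarrow>
     (\<forall>x y z. 1 \<le> x \<longrightarrow> x < y \<longrightarrow> y < z \<longrightarrow> z \<le> n \<longrightarrow> \<not> (\<pi> z < \<pi> x \<and> \<pi> x \<le> \<pi> y))"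
  unfolding avoids_def contains_length3_iff
  by (auto simp: not_less; meson le_less_trans less_le_trans not_le order_trans)

lemma avoids_312_iff:
  "avoids n \<pi> [3, 1, 2] \<longleftrightarrow>
     (\<forall>x y z. 1 \<le> x \<longrightarrow> x < y \<longrightarrow> y < z \<longrightarrow> z \<le> n \<longrightarrow> \<not> (\<pi> y \<le> \<pi> z \<and> \<pi> z < \<pi> x))"
  unfolding avoids_def contains_length3_iff
  by (auto simp: not_less; meson le_less_trans less_le_trans not_le order_trans)

lemma contains_extend:
  assumes "contains m \<sigma> \<tau>" "m \<le> n" "\<And>x. x \<in> {1..m} \<Longrightarrow> \<pi> x = \<sigma> x"
  shows "contains n \<pi> \<tau>"
proof -
  obtain i where "\<forall>s t. s < t \<and> t < length \<tau> \<longrightarrow> i s < i t"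
    and range: "\<forall>s < length \<tau>. 1 \<le> i s \<and> i s \<le> m"
    and "\<forall>s t. s < t \<and> t < length \<tau> \<longrightarrow> (\<sigma> (i s) > \<sigma> (i t) \<longleftrightarrow> \<tau> ! s > \<tau> ! t)"
    using assms(1) unfolding contains_def by blast
  moreover have "\<forall>s < length \<tau>. \<pi> (i s) = \<sigma> (i s)"
    using range assms(3) by auto
  ultimately show ?thesis
    unfolding contains_def using assms(2) by (intro exI[of _ i]) (auto dest: order_trans)
qed

lemma avoids_restrict:
  "avoids n \<pi> \<tau> \<Longrightarrow> m \<le> n \<Longrightarrow> (\<And>x. x \<in> {1..m} \<Longrightarrow> \<pi> x = \<sigma> x) \<Longrightarrow> avoids m \<sigma> \<tau>"
  unfolding avoids_def using contains_extend by blast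

lemma decreasing_eq_reflection:
  fixes f :: "nat \<Rightarrow> nat"
  assumes decreasing: "\<And>y z. a \<le> y \<Longrightarrow> y < z \<Longrightarrow> z \<le> b \<Longrightarrow> f z < f y"
    and "f a \<le> b" "a \<le> f b" and x: "x \<in> {a..b}"
  shows "f x = a + b - x"
proof -
  have upper: "f (a + k) \<le> b - k" if "a + k \<le> b" for k
    using that
  proof (induction k)
    case (Suc k)
    then show ?case using decreasing[of "a + k" "a + Suc k"] by simp
  qed (use assms in simp)
  have lower: "a + k \<le> f (b - k)" if "a + k \<le> b" for k
    using that
  proof (induction k)
    case (Suc k)
    have "f (b - k) < f (b - Suc k)"
      using Suc.prems by (intro decreasing) auto
    with Suc show ?case by simp
  qed (use assms in simp)
  have "a + (b - x) \<le> b"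
    using x by auto
  then show ?thesis
    using upper[of "x - a"] lower[of "b - x"] x by simp
qed

lemma permutes_atLeastAtMost_le_iff:
  fixes \<sigma> :: "nat \<Rightarrow> nat"
  assumes "\<sigma> permutes {1..m}"
  shows "\<sigma> x \<le> m \<longleftrightarrow> x \<le> m" and "1 \<le> \<sigma> x \<longleftrightarrow> 1 \<le> x"
  using permutes_in_image[OF assms, of x] permutes_not_in[OF assms, of x] by auto

definition layered :: "nat \<Rightarrow> (nat \<Rightarrow> nat) set" where
  "layered n = {\<pi>. \<pi> permutes {1..n} \<and> avoids n \<pi> [2, 3, 1] \<and> avoids n \<pi> [3, 1, 2]}"

(* In one-line notation \<sigma>(1) ... \<sigma>(j-1) n (n-1) ... j: the direct sum of \<sigma> and a
  decreasing layer. *)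
definition add_layer :: "nat \<Rightarrow> nat \<Rightarrow> (nat \<Rightarrow> nat) \<Rightarrow> nat \<Rightarrow> nat" where
  "add_layer n j \<sigma> x = (if x < j then \<sigma> x else if x \<le> n then n + j - x else x)"

context
  fixes n j :: nat and \<pi> :: "nat \<Rightarrow> nat"
  assumes layered: "\<pi> \<in> layered n" and j: "j \<in> {1..n}" and max_at: "\<pi> j = n"
begin

private lemma \<pi>_permutes: "\<pi> permutes {1..n}"
  using layered by (simp add: layered_def)

private lemma \<pi>_eq_iff: "\<pi> x = \<pi> y \<longleftrightarrow> x = y"
  using permutes_inj[OF \<pi>_permutes] by (rule inj_eq)

private lemma no_231:
  "1 \<le> x \<Longrightarrow> x < y \<Longrightarrow> y < z \<Longrightarrow> z \<le> n \<Longrightarrow> \<not> (\<pi> z < \<pi> x \<and> \<pi> x \<le> \<pi> y)"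
  using layered unfolding layered_def mem_Collect_eq avoids_231_iff by blast

private lemma no_312:
  "1 \<le> x \<Longrightarrow> x < y \<Longrightarrow> y < z \<Longrightarrow> z \<le> n \<Longrightarrow> \<not> (\<pi> y \<le> \<pi> z \<and> \<pi> z < \<pi> x)"
  using layered unfolding layered_def mem_Collect_eq avoids_312_iff by blast

private lemma in_range: "x \<in> {1..n} \<Longrightarrow> \<pi> x \<in> {1..n}"
  using permutes_in_image[OF \<pi>_permutes] by blast

private lemma less_max:
  assumes "x \<in> {1..n}" "x \<noteq> j"
  shows "\<pi> x < n"
proof -
  have "\<pi> x \<noteq> \<pi> j"
    using assms(2) by (simp add: \<pi>_eq_iff)
  then show ?thesis
    using in_range[OF assms(1)] max_at by auto
qed

lemma layered_prefix_below_suffix: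
  assumes "1 \<le> x" "x < j" "j < y" "y \<le> n"
  shows "\<pi> x < \<pi> y"
proof -
  have "\<pi> x \<le> \<pi> j"
    using in_range[of x] assms max_at by auto
  then have "\<pi> x \<le> \<pi> y"
    using no_231[of x j y] assms by auto
  moreover have "\<pi> x \<noteq> \<pi> y"
    using assms by (simp add: \<pi>_eq_iff)
  ultimately show ?thesis by simp
qed

lemma layered_decreasing_from_max:
  assumes "j \<le> y" "y < z" "z \<le> n"
  shows "\<pi> z < \<pi> y"
proof (cases "y = j")
  case True
  then show ?thesis using less_max[of z] assms max_at by auto
next
  case False
  have "\<pi> z < \<pi> j"
    using less_max[of z] assms j max_at by auto
  then show ?thesis
    using no_312[of j y z] assms j False by auto
qed

(* Pigeonhole: otherwise \<pi> maps the n - j + 2 positions x, j, ..., n into {j..n}. *)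
lemma layered_prefix_into_prefix:
  assumes x: "x \<in> {1..j-1}"
  shows "\<pi> x \<in> {1..j-1}"
proof (rule ccontr)
  assume "\<pi> x \<notin> {1..j-1}"
  moreover have "x \<in> {1..n}"
    using x j by auto
  ultimately have "j \<le> \<pi> x"
    using in_range[of x] by auto
  have "\<pi> b \<in> {j..n}" if b: "b \<in> insert x {j..n}" for b
  proof (cases "b = x \<or> b = j")
    case True
    then show ?thesis
      using \<open>j \<le> \<pi> x\<close> in_range[of x] \<open>x \<in> {1..n}\<close> max_at j by auto
  next
    case False
    then have "\<pi> x < \<pi> b"
      using b x by (intro layered_prefix_below_suffix) auto
    then show ?thesis
      using \<open>j \<le> \<pi> x\<close> in_range[of b] b j by auto
  qed
  then have "\<pi> ` insert x {j..n} \<subseteq> {j..n}"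
    by blast
  moreover have "inj_on \<pi> (insert x {j..n})"
    using permutes_inj_on[OF \<pi>_permutes] .
  ultimately have "card (insert x {j..n}) \<le> card {j..n}"
    by (intro card_inj_on_le) auto
  moreover have "x \<notin> {j..n}"
    using x by auto
  ultimately show False
    by simp
qed

lemma layered_suffix_into_suffix:
  assumes y: "y \<in> {j..n}"
  shows "\<pi> y \<in> {j..n}"
proof (rule ccontr)
  assume "\<pi> y \<notin> {j..n}"
  then have "\<pi> y \<in> {1..j-1}"
    using in_range[of y] y j by auto
  moreover have "\<pi> ` {1..j-1} = {1..j-1}"
    using layered_prefix_into_prefix permutes_inj[OF \<pi>_permutes]
    by (intro endo_inj_surj) (auto intro: inj_on_subset)
  ultimately obtain x where "x \<in> {1..j-1}" "\<pi> x = \<pi> y"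
    by (metis imageE)
  then show False
    using y by (auto simp: \<pi>_eq_iff)
qed

lemma layered_suffix_reversed:
  "y \<in> {j..n} \<Longrightarrow> \<pi> y = n + j - y"
  using decreasing_eq_reflection[of j n \<pi> y] layered_decreasing_from_max
    layered_suffix_into_suffix[of n] max_at j by auto

lemma layered_prefix_layered:
  "restrict_id \<pi> {1..j-1} \<in> layered (j-1)"
proof -
  have "restrict_id \<pi> {1..j-1} permutes {1..j-1}"
    using layered_prefix_into_prefix
    by (intro inj_imp_permutes) (auto simp: inj_on_def \<pi>_eq_iff)
  moreover have "avoids (j-1) (restrict_id \<pi> {1..j-1}) \<tau>" if "avoids n \<pi> \<tau>" for \<tau>
    using j by (intro avoids_restrict[OF that]) auto
  ultimately show ?thesis
    using layered by (simp add: layered_def)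
qed

lemma layered_eq_add_layer:
  "\<pi> = add_layer n j (restrict_id \<pi> {1..j-1})"
proof
  fix x
  show "\<pi> x = add_layer n j (restrict_id \<pi> {1..j-1}) x"
    using layered_suffix_reversed[of x] permutes_not_in[OF \<pi>_permutes, of x] j
    by (cases "x = 0") (auto simp: add_layer_def)
qed

end

lemma layered_decompose:
  assumes "\<pi> \<in> layered n" "1 \<le> n"
  obtains j \<sigma> where "j \<in> {1..n}" "\<sigma> \<in> layered (j-1)" "\<pi> = add_layer n j \<sigma>"
proof -
  have "n \<in> \<pi> ` {1..n}"
    using assms permutes_image[of \<pi> "{1..n}"] by (auto simp: layered_def)
  then obtain j where "j \<in> {1..n}" "\<pi> j = n" by auto
  then show thesis
    using that layered_prefix_layered layered_eq_add_layer assms(1) by blast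
qed

lemma add_layer_at_layer_start [simp]: "j \<le> n \<Longrightarrow> add_layer n j \<sigma> j = n"
  by (simp add: add_layer_def)

lemma permutes_below:
  fixes \<sigma> :: "nat \<Rightarrow> nat"
  assumes "\<sigma> permutes {1..j-1}" "x < j"
  shows "\<sigma> x < j"
proof -
  have "x \<le> j - 1"
    using assms(2) by simp
  then have "\<sigma> x \<le> j - 1"
    using permutes_atLeastAtMost_le_iff(1)[OF assms(1)] by simp
  then show ?thesis
    using assms(2) by simp
qed

context
  fixes n j :: nat and \<sigma> :: "nat \<Rightarrow> nat"
  assumes \<sigma>: "\<sigma> \<in> layered (j-1)" and j: "j \<in> {1..n}"
begin

private lemma \<sigma>_permutes: "\<sigma> permutes {1..j-1}"
  using \<sigma> by (simp add: layered_def)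

private lemma below: "x < j \<Longrightarrow> \<sigma> x < j"
  using permutes_below[OF \<sigma>_permutes] .

private lemma add_layer_less_iff: "x \<le> n \<Longrightarrow> add_layer n j \<sigma> x < j \<longleftrightarrow> x < j"
  using below[of x] by (auto simp: add_layer_def)

lemma add_layer_permutes: "add_layer n j \<sigma> permutes {1..n}"
proof (rule inj_imp_permutes)
  show "inj_on (add_layer n j \<sigma>) {1..n}"
  proof (rule inj_onI)
    fix x y
    assume x: "x \<in> {1..n}" and y: "y \<in> {1..n}"
      and eq: "add_layer n j \<sigma> x = add_layer n j \<sigma> y"
    then have "x < j \<longleftrightarrow> y < j"
      using add_layer_less_iff[of x] add_layer_less_iff[of y] by auto
    then show "x = y"
      using eq x y permutes_inj[OF \<sigma>_permutes] by (auto simp: add_layer_def inj_eq split: if_splits)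
  qed
  show "add_layer n j \<sigma> x \<in> {1..n}" if "x \<in> {1..n}" for x
    using that below[of x] permutes_atLeastAtMost_le_iff(2)[OF \<sigma>_permutes, of x] j
    by (auto simp: add_layer_def)
  show "add_layer n j \<sigma> x = x" if "x \<notin> {1..n}" for x
    using that permutes_not_in[OF \<sigma>_permutes, of x] j by (auto simp: add_layer_def)
qed simp

private lemma triple_cases:
  assumes "1 \<le> x" "x < y" "y < z" "z \<le> n"
  obtains "z \<le> j - 1"
      "add_layer n j \<sigma> x = \<sigma> x" "add_layer n j \<sigma> y = \<sigma> y" "add_layer n j \<sigma> z = \<sigma> z"
  | "add_layer n j \<sigma> z < add_layer n j \<sigma> y" "add_layer n j \<sigma> y < add_layer n j \<sigma> x"
  | "add_layer n j \<sigma> x < add_layer n j \<sigma> z"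
  using assms below[of x] by (cases "z < j"; cases "j \<le> x") (auto simp: add_layer_def)

lemma add_layer_layered: "add_layer n j \<sigma> \<in> layered n"
proof -
  let ?\<tau> = "add_layer n j \<sigma>"
  have \<sigma>_231: "avoids (j-1) \<sigma> [2, 3, 1]" and \<sigma>_312: "avoids (j-1) \<sigma> [3, 1, 2]"
    using \<sigma> by (auto simp: layered_def)
  have "avoids n ?\<tau> [2, 3, 1]"
    unfolding avoids_231_iff
  proof (intro allI impI notI)
    fix x y z
    assume pos: "1 \<le> x" "x < y" "y < z" "z \<le> n"
      and pattern: "?\<tau> z < ?\<tau> x \<and> ?\<tau> x \<le> ?\<tau> y"
    from pos show False
    proof (cases rule: triple_cases)
      case 1
      then show False
        using \<sigma>_231 pos pattern unfolding avoids_231_iff by auto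
    qed (use pattern in auto)
  qed
  moreover have "avoids n ?\<tau> [3, 1, 2]"
    unfolding avoids_312_iff
  proof (intro allI impI notI)
    fix x y z
    assume pos: "1 \<le> x" "x < y" "y < z" "z \<le> n"
      and pattern: "?\<tau> y \<le> ?\<tau> z \<and> ?\<tau> z < ?\<tau> x"
    from pos show False
    proof (cases rule: triple_cases)
      case 1
      then show False
        using \<sigma>_312 pos pattern unfolding avoids_312_iff by auto
    qed (use pattern in auto)
  qed
  ultimately show ?thesis
    using add_layer_permutes by (simp add: layered_def)
qed

lemma add_layer_involution:
  assumes "\<sigma> \<circ> \<sigma> = id"
  shows "add_layer n j \<sigma> \<circ> add_layer n j \<sigma> = id"
proof
  fix x
  show "(add_layer n j \<sigma> \<circ> add_layer n j \<sigma>) x = id x"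
    using below[of x] fun_cong[OF assms, of x] j by (auto simp: add_layer_def)
qed

end

lemma inj_on_add_layer: "inj_on (add_layer n j) {\<sigma>. \<sigma> permutes {1..j-1}}"
proof (rule inj_onI, rule ext)
  fix \<sigma> \<sigma>' x
  assume \<sigma>: "\<sigma> \<in> {\<sigma>. \<sigma> permutes {1..j-1}}" and \<sigma>': "\<sigma>' \<in> {\<sigma>. \<sigma> permutes {1..j-1}}"
    and eq: "add_layer n j \<sigma> = add_layer n j \<sigma>'"
  show "\<sigma> x = \<sigma>' x"
  proof (cases "x < j")
    case True
    then show ?thesis
      using fun_cong[OF eq, of x] by (simp add: add_layer_def)
  next
    case False
    then have "x \<notin> {1..j-1}"
      by auto
    then show ?thesis
      using \<sigma> \<sigma>' by (simp add: permutes_not_in)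
  qed
qed

lemma add_layer_neq:
  assumes "\<sigma>' permutes {1..j'-1}" "j < j'" "j' \<le> n"
  shows "add_layer n j \<sigma> \<noteq> add_layer n j' \<sigma>'"
proof -
  have "add_layer n j' \<sigma>' j < j'"
    using permutes_below[OF assms(1)] assms by (simp add: add_layer_def)
  then have "add_layer n j \<sigma> j \<noteq> add_layer n j' \<sigma>' j"
    using assms by simp
  then show ?thesis
    by auto
qed

lemma layered_0: "layered 0 = {id}"
  unfolding layered_def avoids_231_iff avoids_312_iff by auto

lemma finite_layered: "finite (layered n)"
  by (rule finite_subset[OF _ finite_permutations[of "{1..n}"]]) (auto simp: layered_def)

lemma layered_eq_UN_add_layer:
  assumes "1 \<le> n"
  shows "layered n = (\<Union>j\<in>{1..n}. add_layer n j ` layered (j-1))"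
  using layered_decompose[OF _ assms] add_layer_layered by blast

lemma card_layered_Suc: "card (layered (Suc m)) = (\<Sum>k\<le>m. card (layered k))"
proof -
  have disjoint: "add_layer (Suc m) i ` layered (i-1) \<inter> add_layer (Suc m) j ` layered (j-1) = {}"
    if "i \<in> {1..Suc m}" "j \<in> {1..Suc m}" "i \<noteq> j" for i j
    using that add_layer_neq[of _ i j] add_layer_neq[of _ j i]
    by (cases "i < j") (fastforce simp: layered_def)+
  have "card (layered (Suc m)) = card (\<Union>j\<in>{1..Suc m}. add_layer (Suc m) j ` layered (j-1))"
    using layered_eq_UN_add_layer[of "Suc m"] by simp
  also have "\<dots> = (\<Sum>j\<in>{1..Suc m}. card (add_layer (Suc m) j ` layered (j-1)))"
    using disjoint finite_layered by (intro card_UN_disjoint) auto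
  also have "\<dots> = (\<Sum>j\<in>{1..Suc m}. card (layered (j-1)))"
    using inj_on_add_layer by (intro sum.cong card_image) (auto simp: layered_def intro: inj_on_subset)
  also have "\<dots> = (\<Sum>k\<le>m. card (layered k))"
    by (rule sum.reindex_bij_witness[of _ Suc "\<lambda>j. j - 1"]) auto
  finally show ?thesis .
qed

lemma card_layered: "card (layered (Suc m)) = 2 ^ m"
proof (induction m)
  case 0
  show ?case using card_layered_Suc[of 0] by (simp add: layered_0)
next
  case (Suc m)
  have "card (layered (Suc (Suc m))) = (\<Sum>k\<le>m. card (layered k)) + card (layered (Suc m))"
    unfolding card_layered_Suc[of "Suc m"] by simp
  also have "\<dots> = 2 * 2 ^ m"
    using card_layered_Suc[of m] Suc.IH by simp
  finally show ?case by simp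
qed

lemma layered_involution: "\<pi> \<in> layered n \<Longrightarrow> \<pi> \<circ> \<pi> = id"
proof (induction n arbitrary: \<pi> rule: less_induct)
  case (less n)
  show ?case
  proof (cases "n = 0")
    case True
    then show ?thesis using less.prems by (simp add: layered_0)
  next
    case False
    then obtain j \<sigma> where j: "j \<in> {1..n}" and \<sigma>: "\<sigma> \<in> layered (j-1)"
      and "\<pi> = add_layer n j \<sigma>"
      using layered_decompose[OF less.prems] by auto
    moreover have "j - 1 < n"
      using j by auto
    then have "\<sigma> \<circ> \<sigma> = id"
      using less.IH[OF _ \<sigma>] by blast
    ultimately show ?thesis
      using add_layer_involution[OF \<sigma> j] by simp
  qed
qed

lemma layered_square_avoids:
  "\<pi> \<in> layered n \<Longrightarrow> avoids n (\<pi> \<circ> \<pi>) [2, 3, 1] \<and> avoids n (\<pi> \<circ> \<pi>) [3, 1, 2]"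
  unfolding avoids_231_iff avoids_312_iff by (simp add: layered_involution)

theorem theorem3p4:
  fixes n :: nat
  assumes "n \<ge> 1"
  shows "c n [2,3,1] [3,1,2] [2,3,1] = 2 ^ (n - 1) \<and>
         c n [3,1,2] [2,3,1] [3,1,2] = 2 ^ (n - 1)"
proof -
  have "{\<pi>. \<pi> permutes {1..n} \<and> avoids n \<pi> [2,3,1] \<and> avoids n \<pi> [3,1,2]
            \<and> avoids n (\<pi> \<circ> \<pi>) [2,3,1]} = layered n"
    using layered_square_avoids by (auto simp: layered_def)
  moreover have "{\<pi>. \<pi> permutes {1..n} \<and> avoids n \<pi> [3,1,2] \<and> avoids n \<pi> [2,3,1]
            \<and> avoids n (\<pi> \<circ> \<pi>) [3,1,2]} = layered n"
    using layered_square_avoids by (auto simp: layered_def)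
  moreover have "card (layered n) = 2 ^ (n - 1)"
    using card_layered[of "n - 1"] assms by simp
  ultimately show ?thesis
    unfolding c_def by simp
qed

end
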